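(* Let $q=p^k$ with $p$ prime, $Q_q=\mathrm{GF}(q)$, $Q_{q^2}=Q_q\times Q_q$, and $n\ge2$. Let $r(x_1,\dots,x_n)=\sum_{i,j=1}^n\alpha_{ij}x_ix_j+\sum_{i=1}^n\beta_i(x_i)$ with $\alpha_{ij}\in\mathrm{GF}(q)$ and arbitrary functions $\beta_i:Q_q\to Q_q$. Let $M\subseteq Q_{q^2}^n$ be the set of $((x_1,y_1),\dots,(x_n,y_n))$ satisfying $\sum_{i=1}^n x_i=0$ and $\sum_{i=1}^n y_i+r(x_1,\dots,x_n)=0$. Then $M$ is a topolinear MDS code.
   Context: An MDS code (code distance 2) of length $n$ over an alphabet of size $Q$ is a set $M\subseteq Q_Q^n$ with $|M|=Q^{n-1}$ and any two distinct elements at Hamming distance at least $2$. An isotopism of $Q_{Q}^n$ is a map $\overline{x}\mapsto(\tau_1x_1,\dots,\tau_nx_n)$ with $\tau_i$ permutations of the alphabet; $M$ is topolinear if the group of isotopisms mapping $M$ onto $M$ contains a subgroup of cardinality $|M|$ acting transitively on $M$. *)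

theory Defs
  imports Main "HOL-Library.Cardinality"
begin

text \<open>Words of length n over a finite alphabet, given by the (finite) type 'b;
  the alphabet is UNIV :: 'b set, of size CARD('b).\<close>

definition hamming_dist :: "'b list \<Rightarrow> 'b list \<Rightarrow> nat" where
  "hamming_dist xs ys = card {i. i < length xs \<and> xs ! i \<noteq> ys ! i}"

definition mds_code :: "nat \<Rightarrow> ('b::finite) list set \<Rightarrow> bool" where
  "mds_code n M \<longleftrightarrow> M \<subseteq> {xs. length xs = n} \<and>
     card M = CARD('b) ^ (n - 1) \<and>
     (\<forall>x\<in>M. \<forall>y\<in>M. x \<noteq> y \<longrightarrow> hamming_dist x y \<ge> 2)"

definition isotopism :: "nat \<Rightarrow> ('b \<Rightarrow> 'b) list \<Rightarrow> bool" where
  "isotopism n ts \<longleftrightarrow> length ts = n \<and> (\<forall>t\<in>set ts. bij t)"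

definition iso_apply :: "('b \<Rightarrow> 'b) list \<Rightarrow> 'b list \<Rightarrow> 'b list" where
  "iso_apply ts xs = map2 (\<lambda>t x. t x) ts xs"

definition iso_comp :: "('b \<Rightarrow> 'b) list \<Rightarrow> ('b \<Rightarrow> 'b) list \<Rightarrow> ('b \<Rightarrow> 'b) list" where
  "iso_comp ts ss = map2 (\<circ>) ts ss"

definition iso_inv :: "('b \<Rightarrow> 'b) list \<Rightarrow> ('b \<Rightarrow> 'b) list" where
  "iso_inv ts = map inv ts"

definition iso_id :: "nat \<Rightarrow> ('b \<Rightarrow> 'b) list" where
  "iso_id n = replicate n id"

definition autotopisms :: "nat \<Rightarrow> 'b list set \<Rightarrow> ('b \<Rightarrow> 'b) list set" where
  "autotopisms n M = {ts. isotopism n ts \<and> iso_apply ts ` M = M}"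

definition iso_subgroup :: "nat \<Rightarrow> ('b \<Rightarrow> 'b) list set \<Rightarrow> 'b list set \<Rightarrow> bool" where
  "iso_subgroup n H M \<longleftrightarrow> H \<subseteq> autotopisms n M \<and> iso_id n \<in> H \<and>
     (\<forall>g\<in>H. \<forall>h\<in>H. iso_comp g h \<in> H) \<and> (\<forall>h\<in>H. iso_inv h \<in> H)"

definition topolinear :: "nat \<Rightarrow> ('b::finite) list set \<Rightarrow> bool" where
  "topolinear n M \<longleftrightarrow> (\<exists>H. iso_subgroup n H M \<and> card H = card M \<and>
     (\<forall>x\<in>M. \<forall>y\<in>M. \<exists>h\<in>H. iso_apply h x = y))"

definition rfun :: "nat \<Rightarrow> (nat \<Rightarrow> nat \<Rightarrow> 'a::field) \<Rightarrow> (nat \<Rightarrow> 'a \<Rightarrow> 'a) \<Rightarrow> 'a list \<Rightarrow> 'a" where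
  "rfun n \<alpha> \<beta> xs = (\<Sum>i<n. \<Sum>j<n. \<alpha> i j * xs ! i * xs ! j) + (\<Sum>i<n. \<beta> i (xs ! i))"

definition code_M :: "nat \<Rightarrow> (nat \<Rightarrow> nat \<Rightarrow> 'a::field) \<Rightarrow> (nat \<Rightarrow> 'a \<Rightarrow> 'a) \<Rightarrow> ('a \<times> 'a) list set" where
  "code_M n \<alpha> \<beta> = {w. length w = n \<and> (\<Sum>i<n. fst (w ! i)) = 0 \<and>
      (\<Sum>i<n. snd (w ! i)) + rfun n \<alpha> \<beta> (map fst w) = 0}"

end

theory Submission
  imports Defs
begin

text \<open>Any n - 1 letters of a word of M determine the last one: the sum condition on the
  first coordinates fixes its first coordinate, and the second condition then fixes its second
  coordinate. Hence M is an MDS code with q^(2(n-1)) words.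

  For topolinearity, translate the first coordinates by a vector a with zero sum. For
  Q(x) = \<Sum>\<alpha> i j x i x j with polar form L we have Q(x + a) = Q(x) + \<Sum>i L(a)_i x_i + Q(a), so r changes by
  \<Sum>i (L(a)_i x_i + \<beta> i (x_i + a_i) - \<beta> i x_i) + Q(a): a sum of terms each depending on a
  single coordinate, plus a constant. The coordinatewise shears
  (x, y) \<mapsto> (x + a_i, y + \<beta> i x - \<beta> i (x + a_i) - L(a)_i x + c_i) with \<Sum> c = -Q(a) therefore
  preserve M. They are closed under composition and inversion (composition adds the vectors a,
  as L is linear), and exactly one of them maps a given word of M to another, so they form a
  subgroup of autotopisms acting regularly on M.\<close>

section \<open>Autotopisms\<close>

lemma length_iso_apply [simp]: "length (iso_apply ts xs) = min (length ts) (length xs)"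
  by (simp add: iso_apply_def)

lemma iso_apply_iso_comp:
  assumes "length g = length w" "length h = length w"
  shows "iso_apply (iso_comp g h) w = iso_apply g (iso_apply h w)"
  using assms by (intro nth_equalityI) (simp_all add: iso_apply_def iso_comp_def)

lemma iso_apply_iso_inv:
  assumes "isotopism (length w) h"
  shows "iso_apply (iso_inv h) (iso_apply h w) = w"
proof (intro nth_equalityI)
  fix i assume "i < length (iso_apply (iso_inv h) (iso_apply h w))"
  then have "i < length w" "bij (h ! i)"
    using assms by (auto simp: iso_inv_def isotopism_def)
  then show "iso_apply (iso_inv h) (iso_apply h w) ! i = w ! i"
    using assms by (simp add: iso_apply_def iso_inv_def isotopism_def bij_is_inj)
qed (use assms in \<open>simp add: iso_inv_def isotopism_def\<close>)

lemma isotopism_iso_inv: "isotopism n h \<Longrightarrow> isotopism n (iso_inv h)"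
  by (auto simp: isotopism_def iso_inv_def bij_imp_bij_inv)

lemma inj_on_iso_apply:
  assumes "isotopism n h"
  shows "inj_on (iso_apply h) {w. length w = n}"
  by (rule inj_on_inverseI[where g = "iso_apply (iso_inv h)"]) (use assms iso_apply_iso_inv in auto)

lemma autotopismsI_finite:
  assumes "finite M" "M \<subseteq> {w. length w = n}" "isotopism n h" "iso_apply h ` M \<subseteq> M"
  shows "h \<in> autotopisms n M"
proof -
  have "card (iso_apply h ` M) = card M"
    using inj_on_iso_apply[OF assms(3)] assms(2) by (intro card_image) (rule inj_on_subset)
  then have "iso_apply h ` M = M"
    using assms(1,4) by (intro card_subset_eq)
  then show ?thesis
    using assms(3) by (simp add: autotopisms_def)
qed

lemma iso_id_autotopisms:
  assumes "M \<subseteq> {w. length w = n}"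
  shows "iso_id n \<in> autotopisms n M"
proof -
  have "iso_apply (iso_id n) w = id w" if "w \<in> M" for w
    using assms that by (intro nth_equalityI) (auto simp: iso_apply_def iso_id_def)
  then have "iso_apply (iso_id n) ` M = id ` M"
    by (rule image_cong[OF refl])
  then show ?thesis
    by (simp add: autotopisms_def isotopism_def iso_id_def)
qed

lemma iso_comp_autotopisms:
  assumes M: "M \<subseteq> {w. length w = n}" and "g \<in> autotopisms n M" "h \<in> autotopisms n M"
  shows "iso_comp g h \<in> autotopisms n M"
proof -
  have g: "isotopism n g" "iso_apply g ` M = M" and h: "isotopism n h" "iso_apply h ` M = M"
    using assms(2,3) by (simp_all add: autotopisms_def)
  have "bij (iso_comp g h ! i)" if "i < n" for i
    using g(1) h(1) that by (auto simp: isotopism_def iso_comp_def intro!: bij_comp)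
  then have "isotopism n (iso_comp g h)"
    using g(1) h(1) by (auto simp: isotopism_def iso_comp_def in_set_conv_nth)
  moreover have "iso_apply (iso_comp g h) ` M = iso_apply g ` iso_apply h ` M"
    unfolding image_image using M g(1) h(1)
    by (intro image_cong refl) (auto simp: isotopism_def iso_apply_iso_comp)
  ultimately show ?thesis
    using g(2) h(2) by (simp add: autotopisms_def)
qed

lemma iso_inv_autotopisms:
  assumes M: "M \<subseteq> {w. length w = n}" and "h \<in> autotopisms n M"
  shows "iso_inv h \<in> autotopisms n M"
proof -
  have iso: "isotopism n h" and onto: "iso_apply h ` M = M"
    using assms(2) by (simp_all add: autotopisms_def)
  have "iso_apply (iso_inv h) ` M = iso_apply (iso_inv h) ` iso_apply h ` M"
    by (simp add: onto)
  also have "\<dots> = id ` M"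
    unfolding image_image using M iso
    by (intro image_cong refl) (auto simp: iso_apply_iso_inv)
  finally show ?thesis
    using isotopism_iso_inv[OF iso] by (simp add: autotopisms_def)
qed

lemma topolinearI_regular:
  assumes H: "iso_subgroup n H M" and z: "z \<in> M"
    and inj: "inj_on (\<lambda>h. iso_apply h z) H"
    and transitive: "\<And>u v. u \<in> M \<Longrightarrow> v \<in> M \<Longrightarrow> \<exists>h\<in>H. iso_apply h u = v"
  shows "topolinear n M"
proof -
  have "H \<subseteq> autotopisms n M"
    using H by (simp add: iso_subgroup_def)
  then have "(\<lambda>h. iso_apply h z) ` H \<subseteq> M"
    using z unfolding autotopisms_def by blast
  moreover have "M \<subseteq> (\<lambda>h. iso_apply h z) ` H"
    using transitive[OF z] by blast
  ultimately have "card H = card M"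
    using card_image[OF inj] by simp
  then show ?thesis
    unfolding topolinear_def using H transitive by blast
qed

section \<open>Size and distance of the code\<close>

lemma sum_eq_except_one:
  fixes f g :: "'i \<Rightarrow> 'a::cancel_comm_monoid_add"
  assumes "finite A" "k \<in> A" "sum f A = sum g A" "\<And>i. i \<in> A \<Longrightarrow> i \<noteq> k \<Longrightarrow> f i = g i"
  shows "f k = g k"
proof -
  have "sum f (A - {k}) = sum g (A - {k})"
    using assms(4) by (intro sum.cong) auto
  then show ?thesis
    using assms(3) sum.remove[OF assms(1,2), of f] sum.remove[OF assms(1,2), of g] by simp
qed

lemma length_code_M: "w \<in> code_M n \<alpha> \<beta> \<Longrightarrow> length w = n"
  by (simp add: code_M_def)

lemma finite_code_M: "finite (code_M n \<alpha> (\<beta> :: nat \<Rightarrow> 'a::{field,finite} \<Rightarrow> 'a))"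
proof (rule finite_subset)
  show "code_M n \<alpha> \<beta> \<subseteq> {w. set w \<subseteq> UNIV \<and> length w = n}"
    by (auto simp: code_M_def)
qed (use finite_lists_length_eq[of "UNIV :: ('a \<times> 'a) set" n] in simp)

lemma code_M_sums:
  assumes "w \<in> code_M n \<alpha> \<beta>"
  shows "(\<Sum>i<n. fst (w ! i)) = 0" "(\<Sum>i<n. snd (w ! i)) + rfun n \<alpha> \<beta> (map fst w) = 0"
  using assms unfolding code_M_def by blast+

lemma code_M_eq_if_agree_except:
  assumes u: "u \<in> code_M n \<alpha> \<beta>" and v: "v \<in> code_M n \<alpha> \<beta>"
    and agree: "\<And>i. i < n \<Longrightarrow> i \<noteq> k \<Longrightarrow> u ! i = v ! i"
  shows "u = v"
proof -
  have len: "length u = n" "length v = n"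
    using length_code_M[OF u] length_code_M[OF v] .
  have "(\<Sum>i<n. fst (u ! i)) = (\<Sum>i<n. fst (v ! i))"
    using code_M_sums(1)[OF u] code_M_sums(1)[OF v] by (rule trans[OF _ sym])
  then have fst_k: "fst (u ! k) = fst (v ! k)" if "k < n"
    using agree that
    by (intro sum_eq_except_one[of "{..<n}" k "\<lambda>i. fst (u ! i)" "\<lambda>i. fst (v ! i)"]) auto
  then have "fst (u ! i) = fst (v ! i)" if "i < n" for i
    using agree that by (cases "i = k") auto
  then have "map fst u = map fst v"
    using len by (simp add: list_eq_iff_nth_eq)
  then have "(\<Sum>i<n. snd (u ! i)) + rfun n \<alpha> \<beta> (map fst v) =
      (\<Sum>i<n. snd (v ! i)) + rfun n \<alpha> \<beta> (map fst v)"
    using code_M_sums(2)[OF u] code_M_sums(2)[OF v] by simp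
  then have "(\<Sum>i<n. snd (u ! i)) = (\<Sum>i<n. snd (v ! i))"
    by (rule add_right_imp_eq)
  then have snd_k: "snd (u ! k) = snd (v ! k)" if "k < n"
    using agree that
    by (intro sum_eq_except_one[of "{..<n}" k "\<lambda>i. snd (u ! i)" "\<lambda>i. snd (v ! i)"]) auto
  have "u ! i = v ! i" if "i < n" for i
    using agree fst_k snd_k that by (cases "i = k") (auto simp: prod_eq_iff)
  then show ?thesis
    using len by (simp add: list_eq_iff_nth_eq)
qed

lemma code_M_hamming_dist:
  assumes u: "u \<in> code_M n \<alpha> \<beta>" and v: "v \<in> code_M n \<alpha> \<beta>" and "u \<noteq> v"
  shows "2 \<le> hamming_dist u v"
proof (rule ccontr)
  let ?S = "{i. i < length u \<and> u ! i \<noteq> v ! i}"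
  assume "\<not> 2 \<le> hamming_dist u v"
  then have card: "card ?S \<le> Suc 0"
    by (simp add: hamming_dist_def)
  have len: "length u = n" "length v = n"
    using length_code_M[OF u] length_code_M[OF v] .
  then obtain k where "k \<in> ?S"
    using \<open>u \<noteq> v\<close> by (auto simp: list_eq_iff_nth_eq)
  moreover have "finite ?S"
    by simp
  ultimately have "?S \<subseteq> {k}"
    using card card_le_Suc0_iff_eq[of ?S] by blast
  then have "u = v"
    using len by (intro code_M_eq_if_agree_except[OF u v, of k]) auto
  with \<open>u \<noteq> v\<close> show False ..
qed

definition code_M_completion ::
    "(nat \<Rightarrow> nat \<Rightarrow> 'a::field) \<Rightarrow> (nat \<Rightarrow> 'a \<Rightarrow> 'a) \<Rightarrow> ('a \<times> 'a) list \<Rightarrow> ('a \<times> 'a) list" where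
  "code_M_completion \<alpha> \<beta> xs =
    (let m = length xs; x = - (\<Sum>i<m. fst (xs ! i))
     in xs @ [(x, - (\<Sum>i<m. snd (xs ! i)) - rfun (Suc m) \<alpha> \<beta> (map fst xs @ [x]))])"

lemma code_M_completion_in_code_M:
  "code_M_completion \<alpha> \<beta> xs \<in> code_M (Suc (length xs)) \<alpha> \<beta>"
  by (simp add: code_M_completion_def code_M_def Let_def nth_append)

lemma card_code_M:
  fixes \<alpha> :: "nat \<Rightarrow> nat \<Rightarrow> 'a::{field,finite}"
  shows "card (code_M (Suc m) \<alpha> \<beta>) = CARD('a \<times> 'a) ^ m"
proof -
  have "code_M_completion \<alpha> \<beta> (take m u) = u" if u: "u \<in> code_M (Suc m) \<alpha> \<beta>" for u
  proof (rule code_M_eq_if_agree_except[where k = m])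
    show "code_M_completion \<alpha> \<beta> (take m u) \<in> code_M (Suc m) \<alpha> \<beta>"
      using code_M_completion_in_code_M[of \<alpha> \<beta> "take m u"] length_code_M[OF u] by simp
    fix i assume "i < Suc m" "i \<noteq> m"
    then show "code_M_completion \<alpha> \<beta> (take m u) ! i = u ! i"
      using length_code_M[OF u] by (simp add: code_M_completion_def Let_def nth_append)
  qed (rule u)
  moreover have "take m (code_M_completion \<alpha> \<beta> xs) = xs" if "length xs = m" for xs
    using that by (simp add: code_M_completion_def Let_def)
  moreover have "code_M_completion \<alpha> \<beta> xs \<in> code_M (Suc m) \<alpha> \<beta>" if "length xs = m" for xs
    using that code_M_completion_in_code_M by blast
  ultimately have "bij_betw (take m) (code_M (Suc m) \<alpha> \<beta>) {xs. length xs = m}"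
    by (intro bij_betw_byWitness[where f' = "code_M_completion \<alpha> \<beta>"]) (auto dest: length_code_M)
  then show ?thesis
    using card_lists_length_eq[of "UNIV :: ('a \<times> 'a) set" m] by (simp add: bij_betw_same_card)
qed

section \<open>Quadratic forms\<close>

definition quad_form :: "nat \<Rightarrow> (nat \<Rightarrow> nat \<Rightarrow> 'a::comm_ring) \<Rightarrow> (nat \<Rightarrow> 'a) \<Rightarrow> 'a" where
  "quad_form n \<alpha> x = (\<Sum>i<n. \<Sum>j<n. \<alpha> i j * x i * x j)"

definition polar_form :: "nat \<Rightarrow> (nat \<Rightarrow> nat \<Rightarrow> 'a::comm_ring) \<Rightarrow> (nat \<Rightarrow> 'a) \<Rightarrow> nat \<Rightarrow> 'a" where
  "polar_form n \<alpha> a i = (\<Sum>j<n. (\<alpha> i j + \<alpha> j i) * a j)"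

lemma quad_form_cong: "(\<And>i. i < n \<Longrightarrow> x i = y i) \<Longrightarrow> quad_form n \<alpha> x = quad_form n \<alpha> y"
  unfolding quad_form_def by (intro sum.cong refl) simp

lemma quad_form_add:
  "quad_form n \<alpha> (\<lambda>i. x i + a i) =
     quad_form n \<alpha> x + (\<Sum>i<n. polar_form n \<alpha> a i * x i) + quad_form n \<alpha> a"
proof -
  have "(\<Sum>i<n. polar_form n \<alpha> a i * x i) =
      (\<Sum>i<n. \<Sum>j<n. \<alpha> i j * x i * a j) + (\<Sum>i<n. \<Sum>j<n. \<alpha> j i * a j * x i)"
    unfolding polar_form_def sum_distrib_right sum.distrib[symmetric]
    by (intro sum.cong refl) (simp add: algebra_simps)
  also have "(\<Sum>i<n. \<Sum>j<n. \<alpha> j i * a j * x i) = (\<Sum>i<n. \<Sum>j<n. \<alpha> i j * a i * x j)"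
    by (rule sum.swap)
  finally show ?thesis
    unfolding quad_form_def by (simp add: sum.distrib[symmetric] algebra_simps)
qed

lemma polar_form_cong:
  "(\<And>i. i < n \<Longrightarrow> a i = b i) \<Longrightarrow> polar_form n \<alpha> a k = polar_form n \<alpha> b k"
  unfolding polar_form_def by (intro sum.cong refl) simp

lemma polar_form_add:
  "polar_form n \<alpha> (\<lambda>i. a i + b i) k = polar_form n \<alpha> a k + polar_form n \<alpha> b k"
  unfolding polar_form_def sum.distrib[symmetric] by (intro sum.cong refl) (simp add: algebra_simps)

lemma polar_form_uminus: "polar_form n \<alpha> (\<lambda>i. - a i) k = - polar_form n \<alpha> a k"
  unfolding polar_form_def sum_negf[symmetric] by (intro sum.cong refl) simp

lemma polar_form_zero [simp]: "polar_form n \<alpha> (\<lambda>i. 0) k = 0"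
  by (simp add: polar_form_def)

lemma rfun_shift:
  assumes "\<And>i. i < n \<Longrightarrow> ys ! i = xs ! i + a i"
  shows "rfun n \<alpha> \<beta> ys = rfun n \<alpha> \<beta> xs +
    (\<Sum>i<n. polar_form n \<alpha> a i * xs ! i + (\<beta> i (xs ! i + a i) - \<beta> i (xs ! i))) + quad_form n \<alpha> a"
proof -
  have "rfun n \<alpha> \<beta> ys = quad_form n \<alpha> (\<lambda>i. xs ! i + a i) + (\<Sum>i<n. \<beta> i (xs ! i + a i))"
    using assms quad_form_cong[of n "(!) ys" "\<lambda>i. xs ! i + a i" \<alpha>]
    by (simp add: rfun_def quad_form_def[symmetric])
  moreover have "rfun n \<alpha> \<beta> xs = quad_form n \<alpha> ((!) xs) + (\<Sum>i<n. \<beta> i (xs ! i))"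
    by (simp add: rfun_def quad_form_def)
  ultimately show ?thesis
    unfolding quad_form_add by (simp add: sum.distrib sum_subtractf)
qed

definition shear :: "'a::comm_ring \<Rightarrow> 'a \<Rightarrow> 'a \<Rightarrow> ('a \<Rightarrow> 'a) \<Rightarrow> 'a \<times> 'a \<Rightarrow> 'a \<times> 'a" where
  "shear s t l b = (\<lambda>(x, y). (x + s, y + b x - b (x + s) - l * x + t))"

lemma shear_comp: "shear s t l b \<circ> shear s' t' l' b = shear (s + s') (t + t' - l * s') (l + l') b"
  by (auto simp: shear_def algebra_simps)

lemma shear_zero: "shear 0 0 0 b = id"
  by (auto simp: shear_def)

lemma shear_comp_inverse:
  "shear s t l b \<circ> shear (- s) (- t - l * s) (- l) b = id"
  "shear (- s) (- t - l * s) (- l) b \<circ> shear s t l b = id"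
  by (simp_all add: shear_comp shear_zero algebra_simps)

lemma bij_shear: "bij (shear s t l b)"
  using shear_comp_inverse(2,1) by (rule o_bij)

lemma inv_shear: "inv (shear s t l b) = shear (- s) (- t - l * s) (- l) b"
  using shear_comp_inverse by (rule inv_unique_comp)

section \<open>A regular group of autotopisms of the code\<close>

definition code_shear ::
    "nat \<Rightarrow> (nat \<Rightarrow> nat \<Rightarrow> 'a::field) \<Rightarrow> (nat \<Rightarrow> 'a \<Rightarrow> 'a) \<Rightarrow> (nat \<Rightarrow> 'a) \<Rightarrow> (nat \<Rightarrow> 'a) \<Rightarrow>
      ('a \<times> 'a \<Rightarrow> 'a \<times> 'a) list" where
  "code_shear n \<alpha> \<beta> a c = map (\<lambda>i. shear (a i) (c i) (polar_form n \<alpha> a i) (\<beta> i)) [0..<n]"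

lemma length_code_shear [simp]: "length (code_shear n \<alpha> \<beta> a c) = n"
  by (simp add: code_shear_def)

lemma isotopism_code_shear: "isotopism n (code_shear n \<alpha> \<beta> a c)"
  by (auto simp: isotopism_def code_shear_def bij_shear)

lemma nth_iso_apply_code_shear:
  "length w = n \<Longrightarrow> i < n \<Longrightarrow>
    iso_apply (code_shear n \<alpha> \<beta> a c) w ! i = shear (a i) (c i) (polar_form n \<alpha> a i) (\<beta> i) (w ! i)"
  by (simp add: iso_apply_def code_shear_def)

lemma iso_comp_code_shear:
  "iso_comp (code_shear n \<alpha> \<beta> a c) (code_shear n \<alpha> \<beta> b d) =
    code_shear n \<alpha> \<beta> (\<lambda>i. a i + b i) (\<lambda>i. c i + d i - polar_form n \<alpha> a i * b i)"
  unfolding iso_comp_def code_shear_def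
  by (intro nth_equalityI) (simp_all add: shear_comp polar_form_add)

lemma iso_inv_code_shear:
  "iso_inv (code_shear n \<alpha> \<beta> a c) =
    code_shear n \<alpha> \<beta> (\<lambda>i. - a i) (\<lambda>i. - c i - polar_form n \<alpha> a i * a i)"
  by (simp add: iso_inv_def code_shear_def inv_shear polar_form_uminus)

lemma iso_id_code_shear: "iso_id n = code_shear n \<alpha> \<beta> (\<lambda>i. 0) (\<lambda>i. 0)"
  unfolding iso_id_def code_shear_def by (intro nth_equalityI) (simp_all add: shear_zero)

lemma iso_apply_code_shear_in_code_M_iff:
  assumes w: "w \<in> code_M n \<alpha> \<beta>"
  shows "iso_apply (code_shear n \<alpha> \<beta> a c) w \<in> code_M n \<alpha> \<beta> \<longleftrightarrow>
    (\<Sum>i<n. a i) = 0 \<and> (\<Sum>i<n. c i) + quad_form n \<alpha> a = 0"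
proof -
  let ?v = "iso_apply (code_shear n \<alpha> \<beta> a c) w"
  have len: "length w = n" "length ?v = n"
    using w by (simp_all add: code_M_def code_shear_def)
  have fst_v: "fst (?v ! i) = fst (w ! i) + a i" if "i < n" for i
    using that len by (simp add: nth_iso_apply_code_shear shear_def split_beta)
  have snd_v: "snd (?v ! i) = snd (w ! i) + \<beta> i (fst (w ! i)) - \<beta> i (fst (w ! i) + a i)
      - polar_form n \<alpha> a i * fst (w ! i) + c i" if "i < n" for i
    using that len by (simp add: nth_iso_apply_code_shear shear_def split_beta)
  have "rfun n \<alpha> \<beta> (map fst ?v) = rfun n \<alpha> \<beta> (map fst w) +
      (\<Sum>i<n. polar_form n \<alpha> a i * fst (w ! i) + (\<beta> i (fst (w ! i) + a i) - \<beta> i (fst (w ! i))))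
      + quad_form n \<alpha> a"
    using rfun_shift[of n "map fst ?v" "map fst w" a \<alpha> \<beta>] len fst_v by simp
  then have "(\<Sum>i<n. snd (?v ! i)) + rfun n \<alpha> \<beta> (map fst ?v) =
      ((\<Sum>i<n. snd (w ! i)) + rfun n \<alpha> \<beta> (map fst w)) + ((\<Sum>i<n. c i) + quad_form n \<alpha> a)"
    by (simp add: snd_v sum.distrib sum_subtractf)
  moreover have "(\<Sum>i<n. fst (?v ! i)) = (\<Sum>i<n. fst (w ! i)) + (\<Sum>i<n. a i)"
    by (simp add: fst_v sum.distrib)
  ultimately show ?thesis
    using w len by (simp add: code_M_def)
qed

lemma code_shear_autotopisms:
  fixes \<alpha> :: "nat \<Rightarrow> nat \<Rightarrow> 'a::{field,finite}"
  assumes "(\<Sum>i<n. a i) = 0" "(\<Sum>i<n. c i) + quad_form n \<alpha> a = 0"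
  shows "code_shear n \<alpha> \<beta> a c \<in> autotopisms n (code_M n \<alpha> \<beta>)"
proof (rule autotopismsI_finite)
  show "iso_apply (code_shear n \<alpha> \<beta> a c) ` code_M n \<alpha> \<beta> \<subseteq> code_M n \<alpha> \<beta>"
    using assms iso_apply_code_shear_in_code_M_iff by blast
qed (auto simp: finite_code_M isotopism_code_shear length_code_M)

lemma iso_apply_code_shear_inj:
  assumes "length z = n"
    and eq: "iso_apply (code_shear n \<alpha> \<beta> a c) z = iso_apply (code_shear n \<alpha> \<beta> b d) z"
  shows "code_shear n \<alpha> \<beta> a c = code_shear n \<alpha> \<beta> b d"
proof -
  have shears: "shear (a i) (c i) (polar_form n \<alpha> a i) (\<beta> i) (z ! i) =
      shear (b i) (d i) (polar_form n \<alpha> b i) (\<beta> i) (z ! i)" if "i < n" for i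
    using arg_cong[OF eq, of "\<lambda>v. v ! i"] that assms(1) by (simp add: nth_iso_apply_code_shear)
  have a: "a i = b i" if "i < n" for i
    using shears[OF that] by (simp add: shear_def split_beta)
  then have "polar_form n \<alpha> a i = polar_form n \<alpha> b i" for i
    by (rule polar_form_cong)
  then have "c i = d i" if "i < n" for i
    using shears[OF that] a[OF that] by (simp add: shear_def split_beta)
  with a \<open>\<And>i. polar_form n \<alpha> a i = polar_form n \<alpha> b i\<close> show ?thesis
    by (simp add: code_shear_def)
qed

lemma code_shear_reaches:
  assumes "length u = n" "length v = n"
  obtains a c where "iso_apply (code_shear n \<alpha> \<beta> a c) u = v"
proof
  define a where "a i = fst (v ! i) - fst (u ! i)" for i
  define c where "c i = snd (v ! i) - snd (shear (a i) 0 (polar_form n \<alpha> a i) (\<beta> i) (u ! i))" for i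
  show "iso_apply (code_shear n \<alpha> \<beta> a c) u = v"
    using assms by (intro nth_equalityI)
      (auto simp: nth_iso_apply_code_shear shear_def a_def c_def split_beta prod_eq_iff)
qed

definition shear_group ::
    "nat \<Rightarrow> (nat \<Rightarrow> nat \<Rightarrow> 'a::field) \<Rightarrow> (nat \<Rightarrow> 'a \<Rightarrow> 'a) \<Rightarrow> ('a \<times> 'a \<Rightarrow> 'a \<times> 'a) list set" where
  "shear_group n \<alpha> \<beta> = autotopisms n (code_M n \<alpha> \<beta>) \<inter> {h. \<exists>a c. h = code_shear n \<alpha> \<beta> a c}"

lemma iso_subgroup_shear_group:
  fixes \<alpha> :: "nat \<Rightarrow> nat \<Rightarrow> 'a::{field,finite}"
  shows "iso_subgroup n (shear_group n \<alpha> \<beta>) (code_M n \<alpha> \<beta>)"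
proof -
  have M: "code_M n \<alpha> \<beta> \<subseteq> {w. length w = n}"
    using length_code_M by blast
  let ?S = "{h. \<exists>a c. h = code_shear n \<alpha> \<beta> a c}"
  have "iso_id n \<in> ?S"
    using iso_id_code_shear by blast
  moreover have "iso_comp g h \<in> ?S" if "g \<in> ?S" "h \<in> ?S" for g h
    using that iso_comp_code_shear by force
  moreover have "iso_inv h \<in> ?S" if "h \<in> ?S" for h
    using that iso_inv_code_shear by force
  ultimately show ?thesis
    using iso_id_autotopisms[OF M] iso_comp_autotopisms[OF M] iso_inv_autotopisms[OF M]
    by (auto simp: iso_subgroup_def shear_group_def)
qed

lemma shear_group_transitive:
  fixes \<alpha> :: "nat \<Rightarrow> nat \<Rightarrow> 'a::{field,finite}"
  assumes u: "u \<in> code_M n \<alpha> \<beta>" and v: "v \<in> code_M n \<alpha> \<beta>"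
  shows "\<exists>h\<in>shear_group n \<alpha> \<beta>. iso_apply h u = v"
proof -
  obtain a c where h: "iso_apply (code_shear n \<alpha> \<beta> a c) u = v"
    using code_shear_reaches length_code_M[OF u] length_code_M[OF v] by metis
  then have "(\<Sum>i<n. a i) = 0" "(\<Sum>i<n. c i) + quad_form n \<alpha> a = 0"
    using iso_apply_code_shear_in_code_M_iff[OF u] v by auto
  then have "code_shear n \<alpha> \<beta> a c \<in> shear_group n \<alpha> \<beta>"
    by (auto simp: shear_group_def code_shear_autotopisms)
  with h show ?thesis by blast
qed

lemma topolinear_code_M:
  fixes \<alpha> :: "nat \<Rightarrow> nat \<Rightarrow> 'a::{field,finite}"
  assumes "z \<in> code_M n \<alpha> \<beta>"
  shows "topolinear n (code_M n \<alpha> \<beta>)"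
proof (rule topolinearI_regular[OF iso_subgroup_shear_group assms _ shear_group_transitive])
  show "inj_on (\<lambda>h. iso_apply h z) (shear_group n \<alpha> \<beta>)"
    using iso_apply_code_shear_inj length_code_M[OF assms]
    by (fastforce simp: shear_group_def intro: inj_onI)
qed

theorem theorem2:
  fixes n :: nat and \<alpha> :: "nat \<Rightarrow> nat \<Rightarrow> 'a::{field,finite}" and \<beta> :: "nat \<Rightarrow> 'a \<Rightarrow> 'a"
  assumes "n \<ge> 2"
  shows "mds_code n (code_M n \<alpha> \<beta>) \<and> topolinear n (code_M n \<alpha> \<beta>)"
proof
  obtain m where n: "n = Suc m"
    using assms by (cases n) auto
  have "code_M n \<alpha> \<beta> \<subseteq> {xs. length xs = n}"
    using length_code_M by blast
  moreover have "card (code_M n \<alpha> \<beta>) = CARD('a \<times> 'a) ^ (n - 1)"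
    using card_code_M[of m \<alpha> \<beta>] n by simp
  ultimately show "mds_code n (code_M n \<alpha> \<beta>)"
    unfolding mds_code_def using code_M_hamming_dist by blast
  have "code_M_completion \<alpha> \<beta> (replicate m (0, 0)) \<in> code_M n \<alpha> \<beta>"
    using code_M_completion_in_code_M[of \<alpha> \<beta> "replicate m (0, 0)"] n by simp
  then show "topolinear n (code_M n \<alpha> \<beta>)"
    by (rule topolinear_code_M)
qed

end
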